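(* Let $(X,\mathscr B,\mu,T)$ be a 1-step Markov shift, $\alpha$ its finite time-0 generating partition, and $\lambda$ a symmetric probability measure on $[0,1]$. Then $$\operatorname{Asc}^\lambda_\mu(X,\alpha,T)=\sum_{i=1}^\infty\Big(\int_0^1p^2(1-p)^{i-1}\,\lambda(dp)\Big)H_\mu(\alpha\mid\alpha_i).$$
   Context: 1-step Markov shift: $X=\mathcal A^{\mathbb Z}$, $\mathcal A$ finite, $T$ the shift, $\mu$ the stationary Markov measure given by a stochastic matrix $P$ and a fixed probability vector $p$. $\alpha=\{\{x:x_0=a\}:a\in\mathcal A\}$, $\alpha_i=T^{-i}\alpha$, $\alpha_S=\bigvee_{i\in S}T^{-i}\alpha$. With $n^*=\{0,\dots,n-1\}$ and weights $b_S^n=\int_0^1p^{|S|-1}(1-p)^{n-|S|}\,\lambda(dp)$ for $S\subset n^*$ with $0\in S$, define $\operatorname{Asc}^\lambda_\mu(X,\alpha,T)=\lim_{n\to\infty}\frac1n\sum_{S\subset n^*,\,0\in S}b_S^nH_\mu(\alpha_S)$. $H_\mu(\cdot\mid\cdot)$ is conditional entropy; $\lambda$ symmetric means $\int f(x)\lambda(dx)=\int f(1-x)\lambda(dx)$ for bounded measurable $f$. *)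

theory Defs
  imports "HOL-Probability.Probability"
begin

definition shift :: "(int \<Rightarrow> 'a) \<Rightarrow> (int \<Rightarrow> 'a)" where
  "shift x = (\<lambda>k. x (k + 1))"

definition alpha :: "(int \<Rightarrow> 'a) set set" where
  "alpha = {{x. x 0 = a} | a. True}"

definition alpha_i :: "nat \<Rightarrow> (int \<Rightarrow> 'a) set set" where
  "alpha_i i = (\<lambda>A. (shift ^^ i) -` A) ` alpha"

definition join_family :: "'i set \<Rightarrow> ('i \<Rightarrow> 'b set set) \<Rightarrow> 'b set set" where
  "join_family S Q = {A. A \<noteq> {} \<and> (\<exists>f. (\<forall>i\<in>S. f i \<in> Q i) \<and> A = (\<Inter>i\<in>S. f i))}"

definition alpha_S :: "nat set \<Rightarrow> (int \<Rightarrow> 'a) set set" where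
  "alpha_S S = join_family S alpha_i"

text \<open>Entropy of a finite partition (natural logarithm; 0 ln 0 = 0 since ln 0 = 0).\<close>
definition part_entropy :: "'b measure \<Rightarrow> 'b set set \<Rightarrow> real" where
  "part_entropy M Q = - (\<Sum>A\<in>Q. measure M A * ln (measure M A))"

definition cond_entropy :: "'b measure \<Rightarrow> 'b set set \<Rightarrow> 'b set set \<Rightarrow> real" where
  "cond_entropy M Q R =
     - (\<Sum>A\<in>Q. \<Sum>B\<in>R. measure M (A \<inter> B) * ln (measure M (A \<inter> B) / measure M B))"

definition b_weight :: "real measure \<Rightarrow> nat \<Rightarrow> nat set \<Rightarrow> real" where
  "b_weight lam n S = (\<integral>q. q ^ (card S - 1) * (1 - q) ^ (n - card S) \<partial>lam)"

text \<open>The n-th term whose limit defines Asc^lambda_mu(X, alpha, T).\<close>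
definition asc_seq :: "real measure \<Rightarrow> (int \<Rightarrow> 'a) measure \<Rightarrow> nat \<Rightarrow> real" where
  "asc_seq lam M n = (1 / real n) *
     (\<Sum>S\<in>{S. S \<subseteq> {..<n} \<and> 0 \<in> S}. b_weight lam n S * part_entropy M (alpha_S S))"

end

theory Submission
  imports Defs "HOL-Real_Asymp.Real_Asymp"
begin

text \<open>
  For a Markov measure the probability of a cylinder fixing the coordinates in a finite set S
  factorises along consecutive elements of S into the stationary weight of the first coordinate
  and multi-step transition probabilities; coordinates missing from S are summed out by the
  Chapman-Kolmogorov equation. Hence H(alpha_S) = H(alpha) + the sum over consecutive
  s < s' in S of H(alpha | alpha_(s'-s)). Weighting S with q^(|S|-1) (1-q)^(n-|S|), a gap of
  length i+1 contributes q^2 (1-q)^i (n-1-i) up to a boundary term of bounded total size, so after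
  integrating in q and dividing by n only the series remains in the limit (Tannery's theorem).
\<close>

section \<open>Multi-step transition probabilities\<close>

locale stationary_markov_chain =
  fixes P :: "'a::finite \<Rightarrow> 'a \<Rightarrow> real" and p :: "'a \<Rightarrow> real"
  assumes P_nonneg: "\<And>a b. P a b \<ge> 0"
    and P_stoch: "\<And>a. (\<Sum>b\<in>UNIV. P a b) = 1"
    and p_nonneg: "\<And>a. p a \<ge> 0"
    and p_sum: "(\<Sum>a\<in>UNIV. p a) = 1"
    and p_stat: "\<And>b. (\<Sum>a\<in>UNIV. p a * P a b) = p b"
begin

primrec trans_pow :: "nat \<Rightarrow> 'a \<Rightarrow> 'a \<Rightarrow> real" where
  "trans_pow 0 a b = (if a = b then 1 else 0)"
| "trans_pow (Suc d) a b = (\<Sum>c\<in>UNIV. trans_pow d a c * P c b)"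

lemma trans_pow_nonneg: "trans_pow d a b \<ge> 0"
  by (induction d arbitrary: b) (auto intro!: sum_nonneg mult_nonneg_nonneg P_nonneg)

lemma trans_pow_stoch: "(\<Sum>b\<in>UNIV. trans_pow d a b) = 1"
proof (induction d)
  case (Suc d)
  have "(\<Sum>b\<in>UNIV. trans_pow (Suc d) a b) = (\<Sum>c\<in>UNIV. \<Sum>b\<in>UNIV. trans_pow d a c * P c b)"
    unfolding trans_pow.simps by (rule sum.swap)
  also have "\<dots> = 1"
    by (simp add: P_stoch Suc flip: sum_distrib_left)
  finally show ?case .
qed simp

lemma trans_pow_le_1: "trans_pow d a b \<le> 1"
  using member_le_sum[of b UNIV "trans_pow d a"] by (simp add: trans_pow_nonneg trans_pow_stoch)

lemma trans_pow_stat: "(\<Sum>a\<in>UNIV. p a * trans_pow d a b) = p b"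
proof (induction d arbitrary: b)
  case (Suc d)
  have "(\<Sum>a\<in>UNIV. p a * trans_pow (Suc d) a b) = (\<Sum>a\<in>UNIV. \<Sum>c\<in>UNIV. p a * trans_pow d a c * P c b)"
    by (simp add: sum_distrib_left mult.assoc)
  also have "\<dots> = (\<Sum>c\<in>UNIV. \<Sum>a\<in>UNIV. p a * trans_pow d a c * P c b)"
    by (rule sum.swap)
  also have "\<dots> = p b"
    by (simp add: Suc p_stat flip: sum_distrib_right)
  finally show ?case .
qed (simp add: mult_delta_right)

lemma trans_pow_add: "(\<Sum>c\<in>UNIV. trans_pow d a c * trans_pow d' c b) = trans_pow (d + d') a b"
proof (induction d' arbitrary: b)
  case (Suc d')
  have "(\<Sum>c\<in>UNIV. trans_pow d a c * trans_pow (Suc d') c b)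
      = (\<Sum>c\<in>UNIV. \<Sum>e\<in>UNIV. trans_pow d a c * trans_pow d' c e * P e b)"
    by (simp add: sum_distrib_left mult.assoc)
  also have "\<dots> = (\<Sum>e\<in>UNIV. \<Sum>c\<in>UNIV. trans_pow d a c * trans_pow d' c e * P e b)"
    by (rule sum.swap)
  also have "\<dots> = trans_pow (d + Suc d') a b"
    by (simp add: Suc flip: sum_distrib_right)
  finally show ?case .
qed (simp add: mult_delta_right)

end

section \<open>Cylinder probabilities\<close>

definition prev_elem :: "nat set \<Rightarrow> nat \<Rightarrow> nat" where
  "prev_elem S i = Max {j\<in>S. j < i}"

lemma prev_elem_in:
  assumes "finite S" "i \<in> S - {Min S}"
  shows "prev_elem S i \<in> S"
proof -
  have "Min S \<in> S" "Min S \<le> i" "i \<noteq> Min S"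
    using assms by (auto intro: Min_in)
  then have "Min S \<in> {j\<in>S. j < i}"
    by simp
  then show ?thesis
    unfolding prev_elem_def using assms(1) Max_in[of "{j\<in>S. j < i}"] by auto
qed

lemma prev_elem_insert_greater:
  "finite S \<Longrightarrow> i < m \<Longrightarrow> prev_elem (insert m S) i = prev_elem S i"
  unfolding prev_elem_def by (rule arg_cong[where f = Max]) auto

context stationary_markov_chain
begin

definition cyl_prob :: "nat set \<Rightarrow> (nat \<Rightarrow> 'a) \<Rightarrow> real" where
  "cyl_prob S w = p (w (Min S)) *
     (\<Prod>i\<in>S - {Min S}. trans_pow (i - prev_elem S i) (w (prev_elem S i)) (w i))"

lemma cyl_prob_singleton [simp]: "cyl_prob {s} w = p (w s)"
  by (simp add: cyl_prob_def)

lemma cyl_prob_cong: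
  assumes "finite S" "S \<noteq> {}" "\<And>i. i \<in> S \<Longrightarrow> w i = w' i"
  shows "cyl_prob S w = cyl_prob S w'"
  unfolding cyl_prob_def using assms prev_elem_in[OF assms(1)]
  by (intro arg_cong2[where f = "(*)"] prod.cong) auto

lemma cyl_prob_insert_max:
  assumes "finite S" "S \<noteq> {}" "\<forall>i\<in>S. i < m"
  shows "cyl_prob (insert m S) w = cyl_prob S w * trans_pow (m - Max S) (w (Max S)) (w m)"
proof -
  have "Min S < m"
    using assms Min_in by blast
  then have min: "Min (insert m S) = Min S"
    using assms by (simp add: Min_insert)
  have m: "m \<notin> S - {Min S}" "insert m S - {Min S} = insert m (S - {Min S})"
    using assms(3) \<open>Min S < m\<close> by blast+
  have "prev_elem (insert m S) m = Max S"
    unfolding prev_elem_def using assms by (intro arg_cong[where f = Max]) auto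
  moreover have "(\<Prod>i\<in>S - {Min S}. trans_pow (i - prev_elem (insert m S) i) (w (prev_elem (insert m S) i)) (w i))
      = (\<Prod>i\<in>S - {Min S}. trans_pow (i - prev_elem S i) (w (prev_elem S i)) (w i))"
    using assms by (intro prod.cong refl) (simp add: prev_elem_insert_greater)
  ultimately show ?thesis
    unfolding cyl_prob_def min m(2) using assms(1) m(1) by (simp add: mult_ac)
qed

lemma cyl_prob_insert_max_upd:
  assumes "finite S" "S \<noteq> {}" "\<forall>i\<in>S. i < m"
  shows "cyl_prob (insert m S) (w(m := c)) = cyl_prob S w * trans_pow (m - Max S) (w (Max S)) c"
proof -
  have "Max S \<in> S"
    using assms by simp
  then have "Max S \<noteq> m"
    using assms(3) by blast
  moreover have "cyl_prob S (w(m := c)) = cyl_prob S w"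
    using assms by (auto intro!: cyl_prob_cong)
  ultimately show ?thesis
    using cyl_prob_insert_max[OF assms, of "w(m := c)"] by simp
qed

lemma cyl_prob_interval:
  "cyl_prob {k..k + n} w = p (w k) * (\<Prod>j<n. P (w (k + j)) (w (k + Suc j)))"
proof (induction n)
  case (Suc n)
  have "{k..k + Suc n} = insert (k + Suc n) {k..k + n}" "Max {k..k + n} = k + n"
    by (auto intro!: Max_eqI)
  then show ?case
    using Suc by (simp add: cyl_prob_insert_max mult_delta_left)
qed simp

lemma sum_cyl_prob_insert_second_max:
  assumes "finite A" "A \<noteq> {}" "\<forall>a\<in>A. a < j" "j < m"
  shows "(\<Sum>c\<in>UNIV. cyl_prob (insert m (insert j A)) (w(j := c))) = cyl_prob (insert m A) w"
proof -
  have "Max A \<in> A"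
    using assms by simp
  then have "Max A < j" "j \<noteq> Max A"
    using assms(3) by blast+
  have "Max (insert j A) = j"
    using assms by (auto intro!: Max_eqI)
  have "cyl_prob (insert m (insert j A)) (w(j := c))
      = cyl_prob A w * (trans_pow (j - Max A) (w (Max A)) c * trans_pow (m - j) c (w m))" for c
  proof -
    have "cyl_prob (insert m (insert j A)) (w(j := c)) = cyl_prob (insert j A) (w(j := c)) * trans_pow (m - j) c (w m)"
      using assms \<open>Max (insert j A) = j\<close> by (subst cyl_prob_insert_max) auto
    also have "cyl_prob (insert j A) (w(j := c)) = cyl_prob A w * trans_pow (j - Max A) (w (Max A)) c"
      using assms(1-3) by (rule cyl_prob_insert_max_upd)
    finally show ?thesis
      by (simp only: mult.assoc)
  qed
  then have "(\<Sum>c\<in>UNIV. cyl_prob (insert m (insert j A)) (w(j := c)))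
      = cyl_prob A w * trans_pow (m - Max A) (w (Max A)) (w m)"
    using \<open>Max A < j\<close> assms(4) trans_pow_add[of "j - Max A" _ "m - j"] by (simp flip: sum_distrib_left)
  also have "\<dots> = cyl_prob (insert m A) w"
    using assms cyl_prob_insert_max[of A m w] by fastforce
  finally show ?thesis .
qed

text \<open>Summing out a coordinate strictly inside the hull of S is the Chapman-Kolmogorov equation
  for its two neighbours in S.\<close>
lemma sum_cyl_prob_insert:
  assumes "finite S" "S \<noteq> {}" "j \<notin> S" "Min S < j" "j < Max S"
  shows "(\<Sum>c\<in>UNIV. cyl_prob (insert j S) (w(j := c))) = cyl_prob S w"
  using assms
proof (induction S arbitrary: j rule: finite_linorder_max_induct)
  case (insert m A)
  have A: "A \<noteq> {}"
    using insert.prems by (auto simp del: Max_less_iff)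
  have "Max (insert m A) = m"
    using insert.hyps A by (auto intro!: Max_eqI)
  moreover have "Max A \<in> A"
    using insert.hyps A by simp
  ultimately have "j \<noteq> Max A" "j < m"
    using insert.prems by auto
  have swap: "insert j (insert m A) = insert m (insert j A)"
    by blast
  show ?case
  proof (cases "Max A < j")
    case True
    then have "\<forall>a\<in>A. a < j"
      using insert.hyps A by (meson Max_ge le_less_trans)
    then show ?thesis
      unfolding swap by (rule sum_cyl_prob_insert_second_max[OF insert.hyps(1) A _ \<open>j < m\<close>])
  next
    case False
    then have "j < Max A"
      using \<open>j \<noteq> Max A\<close> by simp
    have "Max (insert j A) = Max A" "\<forall>a\<in>insert j A. a < m"
      using insert.hyps A \<open>j < Max A\<close> \<open>j < m\<close> by (auto intro!: Max_eqI)
    then have "cyl_prob (insert m (insert j A)) (w(j := c))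
        = cyl_prob (insert j A) (w(j := c)) * trans_pow (m - Max A) (w (Max A)) (w m)" for c
      using insert.hyps \<open>j < m\<close> \<open>j \<noteq> Max A\<close> by (simp add: cyl_prob_insert_max)
    then have "(\<Sum>c\<in>UNIV. cyl_prob (insert j (insert m A)) (w(j := c)))
        = (\<Sum>c\<in>UNIV. cyl_prob (insert j A) (w(j := c))) * trans_pow (m - Max A) (w (Max A)) (w m)"
      unfolding swap by (simp only: sum_distrib_right)
    also have "(\<Sum>c\<in>UNIV. cyl_prob (insert j A) (w(j := c))) = cyl_prob A w"
      using insert.prems insert.hyps A \<open>j < Max A\<close> by (intro insert.IH) (auto simp: Min_insert)
    also have "cyl_prob A w * trans_pow (m - Max A) (w (Max A)) (w m) = cyl_prob (insert m A) w"
      using insert.hyps A by (simp add: cyl_prob_insert_max)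
    finally show ?thesis .
  qed
qed blast

end

definition cylinder :: "nat set \<Rightarrow> (nat \<Rightarrow> 'a) \<Rightarrow> (int \<Rightarrow> 'a) set" where
  "cylinder S w = {x. \<forall>i\<in>S. x (int i) = w i}"

locale markov_shift = stationary_markov_chain P p for P :: "'a::finite \<Rightarrow> 'a \<Rightarrow> real" and p +
  fixes M :: "(int \<Rightarrow> 'a) measure"
  assumes M_prob: "prob_space M"
    and M_space: "space M = UNIV"
    and M_sets: "sets M = sets (Pi\<^sub>M UNIV (\<lambda>_::int. count_space (UNIV :: 'a set)))"
    and M_markov: "\<And>(k::int) (n::nat) (w::nat \<Rightarrow> 'a).
        measure M {x. \<forall>j<Suc n. x (k + int j) = w j}
          = p (w 0) * (\<Prod>j<n. P (w j) (w (Suc j)))"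
begin

lemma cylinder_in_sets:
  assumes "finite S"
  shows "cylinder S w \<in> sets M"
proof -
  have "(\<lambda>x. x (int i)) \<in> measurable M (count_space UNIV)" for i
    using measurable_component_singleton[of "int i" UNIV "\<lambda>_::int. count_space (UNIV :: 'a set)"]
    by (simp add: measurable_cong_sets[OF M_sets refl])
  then have "(\<lambda>x. x (int i)) -` {w i} \<inter> space M \<in> sets M" for i
    by (rule measurable_sets) simp
  then have "{x\<in>space M. x (int i) = w i} \<in> sets M" for i
    by (simp add: vimage_def Int_def conj_commute)
  then have "{x\<in>space M. \<forall>i\<in>S. x (int i) = w i} \<in> sets M"
    using assms by (intro sets.sets_Collect_finite_All)
  then show ?thesis
    by (simp add: cylinder_def M_space)
qed

lemma measure_cylinder_sum:
  assumes "finite S" "j \<notin> S"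
  shows "measure M (cylinder S w) = (\<Sum>c\<in>UNIV. measure M (cylinder (insert j S) (w(j := c))))"
proof -
  interpret prob_space M by (rule M_prob)
  have "cylinder S w = (\<Union>c. cylinder (insert j S) (w(j := c)))"
    using assms by (auto simp: cylinder_def)
  moreover have "disjoint_family (\<lambda>c. cylinder (insert j S) (w(j := c)))"
    by (auto simp: disjoint_family_on_def cylinder_def)
  ultimately show ?thesis
    using assms measure_finite_Union[of UNIV "\<lambda>c. cylinder (insert j S) (w(j := c))" M]
    by (simp add: image_subset_iff cylinder_in_sets)
qed

lemma measure_cylinder_interval: "measure M (cylinder {k..k + n} w) = cyl_prob {k..k + n} w"
proof -
  have "cylinder {k..k + n} w = {x. \<forall>j<Suc n. x (int k + int j) = w (k + j)}"
    unfolding cylinder_def by (metis (no_types, opaque_lifting) atLeastAtMost_iff le_add1 less_Suc_eq_le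
        nat_le_iff_add add_le_cancel_left of_nat_add)
  then show ?thesis
    using M_markov[where k = "int k" and n = n and w = "\<lambda>j. w (k + j)"] by (simp add: cyl_prob_interval)
qed

lemma measure_cylinder:
  assumes "finite S" "S \<noteq> {}"
  shows "measure M (cylinder S w) = cyl_prob S w"
proof -
  define k where "k = card ({Min S..Max S} - S)"
  then show ?thesis
    using assms
  proof (induction k arbitrary: S w rule: less_induct)
    case (less k)
    show ?case
    proof (cases "{Min S..Max S} - S = {}")
      case True
      then have "S = {Min S..Min S + (Max S - Min S)}"
        using less.prems by auto
      then show ?thesis
        by (metis measure_cylinder_interval)
    next
      case False
      then obtain j where j: "j \<in> {Min S..Max S}" "j \<notin> S"
        by blast
      then have "Min S < j" "j < Max S"
        using less.prems by (metis atLeastAtMost_iff Min_in Max_in le_neq_trans)+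
      then have "Min (insert j S) = Min S" "Max (insert j S) = Max S"
        using less.prems by (simp_all add: Min_insert Max_insert)
      then have gaps: "{Min (insert j S)..Max (insert j S)} - insert j S = ({Min S..Max S} - S) - {j}"
        by auto
      have fewer_gaps: "card ({Min (insert j S)..Max (insert j S)} - insert j S) < k"
        unfolding gaps less.prems(1) using j by (intro card_Diff1_less) auto
      have "measure M (cylinder S w) = (\<Sum>c\<in>UNIV. measure M (cylinder (insert j S) (w(j := c))))"
        using less.prems j by (intro measure_cylinder_sum) auto
      also have "\<dots> = (\<Sum>c\<in>UNIV. cyl_prob (insert j S) (w(j := c)))"
        using less.IH[OF fewer_gaps refl] less.prems by (simp del: fun_upd_apply)
      also have "\<dots> = cyl_prob S w"
        using less.prems j \<open>Min S < j\<close> \<open>j < Max S\<close> by (intro sum_cyl_prob_insert) auto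
      finally show ?thesis .
    qed
  qed
qed

lemma cyl_prob_nonneg: "finite S \<Longrightarrow> S \<noteq> {} \<Longrightarrow> cyl_prob S w \<ge> 0"
  by (simp flip: measure_cylinder)

end

section \<open>Cylinder partitions and their entropy\<close>

lemma shift_pow_apply: "(shift ^^ i) x k = x (k + int i)"
  by (induction i arbitrary: k) (simp_all add: shift_def algebra_simps)

lemma alpha_eq: "alpha = (\<lambda>a. {x. x 0 = a}) ` UNIV"
  by (auto simp: alpha_def)

lemma alpha_i_eq: "alpha_i i = (\<lambda>a. {x. x (int i) = a}) ` UNIV"
proof -
  have "(shift ^^ i) -` {x. x 0 = a} = {x. x (int i) = a}" for a :: 'a
    by (auto simp: shift_pow_apply)
  then show ?thesis
    unfolding alpha_i_def alpha_eq image_image by simp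
qed

lemma inj_coordinate_set: "inj (\<lambda>a. {x :: int \<Rightarrow> 'a. x k = a})"
proof (rule injI)
  fix a b :: 'a
  assume eq: "{x. x k = a} = {x. x k = b}"
  have "(\<lambda>_. a) \<in> {x :: int \<Rightarrow> 'a. x k = a}"
    by simp
  then show "a = b"
    unfolding eq by simp
qed

lemma cylinder_nonempty: "cylinder S w \<noteq> {}"
  by (auto simp: cylinder_def intro!: exI[of _ "\<lambda>k. w (nat k)"])

lemma alpha_S_eq: "alpha_S S = cylinder S ` (S \<rightarrow>\<^sub>E UNIV)"
proof (intro set_eqI iffI)
  fix A assume "A \<in> alpha_S S"
  then obtain f where f: "\<forall>i\<in>S. f i \<in> alpha_i i" "A = (\<Inter>i\<in>S. f i)"
    unfolding alpha_S_def join_family_def by auto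
  have "\<forall>i\<in>S. \<exists>a. f i = {x. x (int i) = a}"
    using f(1) by (auto simp: alpha_i_eq)
  then obtain w where "\<forall>i\<in>S. f i = {x. x (int i) = w i}"
    by metis
  then have "A = cylinder S (restrict w S)"
    using f(2) by (auto simp: cylinder_def)
  then show "A \<in> cylinder S ` (S \<rightarrow>\<^sub>E UNIV)"
    by auto
next
  fix A assume "A \<in> cylinder S ` (S \<rightarrow>\<^sub>E UNIV)"
  then obtain w where w: "A = cylinder S w"
    by auto
  let ?f = "\<lambda>i. {x. x (int i) = w i}"
  have "\<forall>i\<in>S. ?f i \<in> alpha_i i" "A = (\<Inter>i\<in>S. ?f i)" "A \<noteq> {}"
    using w cylinder_nonempty by (auto simp: alpha_i_eq cylinder_def)
  then show "A \<in> alpha_S S"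
    unfolding alpha_S_def join_family_def by (intro CollectI conjI exI[of _ ?f])
qed

lemma inj_on_cylinder: "inj_on (cylinder S) (S \<rightarrow>\<^sub>E UNIV)"
proof (rule inj_onI)
  fix w w' assume w: "w \<in> S \<rightarrow>\<^sub>E UNIV" "w' \<in> S \<rightarrow>\<^sub>E UNIV" and eq: "cylinder S w = cylinder S w'"
  have "(\<lambda>k. w (nat k)) \<in> cylinder S w"
    by (simp add: cylinder_def)
  then have "(\<lambda>k. w (nat k)) \<in> cylinder S w'"
    by (simp only: eq)
  then show "w = w'"
    using w by (intro PiE_ext) (auto simp: cylinder_def)
qed

lemma sum_PiE_insert:
  assumes "finite S" "m \<notin> S"
  shows "(\<Sum>w\<in>insert m S \<rightarrow>\<^sub>E (UNIV :: 'a::finite set). f w)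
    = (\<Sum>g\<in>S \<rightarrow>\<^sub>E UNIV. \<Sum>c\<in>UNIV. f (g(m := c)))"
proof -
  have "(\<Sum>w\<in>insert m S \<rightarrow>\<^sub>E (UNIV :: 'a set). f w)
      = (\<Sum>(c, g)\<in>UNIV \<times> (S \<rightarrow>\<^sub>E UNIV). f (g(m := c)))"
    unfolding PiE_insert_eq using assms
    by (subst sum.reindex) (auto intro!: inj_combinator simp: case_prod_beta comp_def)
  also have "\<dots> = (\<Sum>c\<in>UNIV. \<Sum>g\<in>S \<rightarrow>\<^sub>E UNIV. f (g(m := c)))"
    by (simp add: sum.cartesian_product)
  also have "\<dots> = (\<Sum>g\<in>S \<rightarrow>\<^sub>E UNIV. \<Sum>c\<in>UNIV. f (g(m := c)))"
    by (rule sum.swap)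
  finally show ?thesis .
qed

lemma neg_xlnx_bounds:
  assumes "0 \<le> x" "x \<le> (1::real)"
  shows "0 \<le> - (x * ln x) \<and> - (x * ln x) \<le> 1"
proof (cases "x = 0")
  case False
  then have "0 < x"
    using assms by simp
  then have "ln (1 / x) \<le> 1 / x - 1"
    by (intro ln_le_minus_one) simp
  then have "x * - ln x \<le> x * (1 / x - 1)"
    using \<open>0 < x\<close> by (intro mult_left_mono) (auto simp: ln_div)
  also have "\<dots> = 1 - x"
    using \<open>0 < x\<close> by (simp add: field_simps)
  finally have "- (x * ln x) \<le> 1 - x"
    by simp
  moreover have "0 \<le> - (x * ln x)"
    using \<open>0 < x\<close> assms(2) by (simp add: mult_nonneg_nonpos)
  ultimately show ?thesis
    using assms by linarith
qed simp

lemma xlnx_mult: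
  "x \<ge> 0 \<Longrightarrow> y \<ge> 0 \<Longrightarrow> x * y * ln (x * y) = y * (x * ln x) + x * (y * ln (y :: real))"
  by (cases "x = 0 \<or> y = 0") (auto simp: ln_mult algebra_simps)

lemma sum_xlnx_div_marginal:
  fixes t :: "'a \<Rightarrow> 'b \<Rightarrow> real"
  assumes "finite A" "finite B" "\<And>a b. t a b \<ge> 0" "\<And>b. (\<Sum>a\<in>A. t a b) = q b"
  shows "(\<Sum>a\<in>A. \<Sum>b\<in>B. t a b * ln (t a b / q b))
    = (\<Sum>a\<in>A. \<Sum>b\<in>B. t a b * ln (t a b)) - (\<Sum>b\<in>B. q b * ln (q b))"
proof -
  have "t a b * ln (t a b / q b) = t a b * ln (t a b) - t a b * ln (q b)" if "a \<in> A" for a b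
  proof (cases "t a b = 0")
    case False
    then have "0 < t a b" "t a b \<le> q b"
      using assms that member_le_sum[of a A "\<lambda>a. t a b"] by (auto simp: order.strict_iff_order)
    then show ?thesis
      by (simp add: ln_div right_diff_distrib)
  qed simp
  then have "(\<Sum>a\<in>A. \<Sum>b\<in>B. t a b * ln (t a b / q b))
      = (\<Sum>a\<in>A. \<Sum>b\<in>B. t a b * ln (t a b)) - (\<Sum>a\<in>A. \<Sum>b\<in>B. t a b * ln (q b))"
    by (simp add: sum_subtractf)
  also have "(\<Sum>a\<in>A. \<Sum>b\<in>B. t a b * ln (q b)) = (\<Sum>b\<in>B. \<Sum>a\<in>A. t a b * ln (q b))"
    by (rule sum.swap)
  also have "\<dots> = (\<Sum>b\<in>B. q b * ln (q b))"
    by (simp add: assms(4) flip: sum_distrib_right)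
  finally show ?thesis .
qed

context markov_shift
begin

definition state_entropy :: real where
  "state_entropy = - (\<Sum>a\<in>UNIV. p a * ln (p a))"

definition trans_entropy :: "nat \<Rightarrow> real" where
  "trans_entropy d = - (\<Sum>a\<in>UNIV. \<Sum>b\<in>UNIV. p a * trans_pow d a b * ln (trans_pow d a b))"

lemma part_entropy_alpha_S:
  assumes "finite S" "S \<noteq> {}"
  shows "part_entropy M (alpha_S S) = - (\<Sum>w\<in>S \<rightarrow>\<^sub>E UNIV. cyl_prob S w * ln (cyl_prob S w))"
  unfolding part_entropy_def alpha_S_eq
  by (simp add: sum.reindex[OF inj_on_cylinder] measure_cylinder[OF assms])

lemma sum_cyl_prob_last:
  assumes "finite S" "S \<noteq> {}"
  shows "(\<Sum>w\<in>S \<rightarrow>\<^sub>E UNIV. cyl_prob S w * f (w (Max S))) = (\<Sum>a\<in>UNIV. p a * f a)"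
  using assms
proof (induction S arbitrary: f rule: finite_linorder_max_induct)
  case (insert m A)
  show ?case
  proof (cases "A = {}")
    case True
    then show ?thesis
      by (simp add: sum_PiE_insert)
  next
    case False
    have "Max (insert m A) = m" "m \<notin> A"
      using insert.hyps False by (auto intro!: Max_eqI)
    then have "(\<Sum>w\<in>insert m A \<rightarrow>\<^sub>E UNIV. cyl_prob (insert m A) w * f (w (Max (insert m A))))
        = (\<Sum>g\<in>A \<rightarrow>\<^sub>E UNIV. cyl_prob A g * (\<Sum>c\<in>UNIV. trans_pow (m - Max A) (g (Max A)) c * f c))"
      using insert.hyps False
      by (simp add: sum_PiE_insert cyl_prob_insert_max_upd sum_distrib_left mult.assoc)
    also have "\<dots> = (\<Sum>a\<in>UNIV. p a * (\<Sum>c\<in>UNIV. trans_pow (m - Max A) a c * f c))"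
      by (rule insert.IH[OF False])
    also have "\<dots> = (\<Sum>a\<in>UNIV. \<Sum>c\<in>UNIV. p a * trans_pow (m - Max A) a c * f c)"
      by (simp add: sum_distrib_left mult.assoc)
    also have "\<dots> = (\<Sum>c\<in>UNIV. \<Sum>a\<in>UNIV. p a * trans_pow (m - Max A) a c * f c)"
      by (rule sum.swap)
    also have "\<dots> = (\<Sum>c\<in>UNIV. p c * f c)"
      by (simp add: trans_pow_stat flip: sum_distrib_right)
    finally show ?thesis .
  qed
qed simp

lemma part_entropy_singleton: "part_entropy M (alpha_S {s}) = state_entropy"
  by (simp add: part_entropy_alpha_S sum_PiE_insert state_entropy_def)

lemma part_entropy_insert_max:
  assumes "finite A" "A \<noteq> {}" "\<forall>a\<in>A. a < m"
  shows "part_entropy M (alpha_S (insert m A)) = part_entropy M (alpha_S A) + trans_entropy (m - Max A)"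
proof -
  let ?Q = "trans_pow (m - Max A)"
  let ?xlnx = "\<lambda>x::real. x * ln x"
  have "m \<notin> A"
    using assms by auto
  have "(\<Sum>c\<in>UNIV. ?xlnx (cyl_prob (insert m A) (g(m := c))))
      = ?xlnx (cyl_prob A g) + cyl_prob A g * (\<Sum>c\<in>UNIV. ?xlnx (?Q (g (Max A)) c))" for g
  proof -
    have "(\<Sum>c\<in>UNIV. ?xlnx (cyl_prob (insert m A) (g(m := c))))
        = (\<Sum>c\<in>UNIV. ?Q (g (Max A)) c * ?xlnx (cyl_prob A g) + cyl_prob A g * ?xlnx (?Q (g (Max A)) c))"
      using assms cyl_prob_nonneg[OF assms(1,2)] trans_pow_nonneg
      by (intro sum.cong refl) (simp add: cyl_prob_insert_max_upd xlnx_mult)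
    then show ?thesis
      by (simp add: sum.distrib trans_pow_stoch flip: sum_distrib_left sum_distrib_right)
  qed
  then have "(\<Sum>w\<in>insert m A \<rightarrow>\<^sub>E UNIV. ?xlnx (cyl_prob (insert m A) w))
      = (\<Sum>g\<in>A \<rightarrow>\<^sub>E UNIV. ?xlnx (cyl_prob A g)) + (\<Sum>a\<in>UNIV. p a * (\<Sum>c\<in>UNIV. ?xlnx (?Q a c)))"
    using assms(1) \<open>m \<notin> A\<close> sum_cyl_prob_last[OF assms(1,2), of "\<lambda>a. \<Sum>c\<in>UNIV. ?xlnx (?Q a c)"]
    by (simp add: sum_PiE_insert sum.distrib)
  then show ?thesis
    using assms by (simp add: part_entropy_alpha_S trans_entropy_def sum_distrib_left mult.assoc)
qed

text \<open>Both marginals of the pair of coordinates 0 and d are the stationary vector p, so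
  H(x_0 | x_d) = H(x_0, x_d) - H(p) = H(x_d | x_0), and the latter is the transition entropy.\<close>
lemma cond_entropy_alpha_i:
  assumes "d \<ge> 1"
  shows "cond_entropy M alpha (alpha_i d) = trans_entropy d"
proof -
  let ?t = "\<lambda>a b. p a * trans_pow d a b"
  let ?xlnx = "\<lambda>x::real. x * ln x"
  have joint: "measure M ({x. x 0 = a} \<inter> {x. x (int d) = b}) = ?t a b" for a b
  proof -
    let ?w = "\<lambda>i::nat. if i = 0 then a else b"
    have "{x. x 0 = a} \<inter> {x. x (int d) = b} = cylinder (insert d {0}) ?w"
      using assms by (auto simp: cylinder_def)
    then show ?thesis
      using assms by (simp add: measure_cylinder cyl_prob_insert_max)
  qed
  have marginal: "measure M {x. x (int d) = b} = p b" for b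
  proof -
    have "{x. x (int d) = b} = cylinder {d} (\<lambda>_. b)"
      by (auto simp: cylinder_def)
    then show ?thesis
      by (simp add: measure_cylinder)
  qed
  have "cond_entropy M alpha (alpha_i d) = - (\<Sum>a\<in>UNIV. \<Sum>b\<in>UNIV. ?t a b * ln (?t a b / p b))"
    unfolding cond_entropy_def alpha_eq alpha_i_eq
    by (simp add: sum.reindex inj_coordinate_set joint marginal)
  also have "\<dots> = - ((\<Sum>a\<in>UNIV. \<Sum>b\<in>UNIV. ?xlnx (?t a b)) - (\<Sum>b\<in>UNIV. ?xlnx (p b)))"
    by (simp add: sum_xlnx_div_marginal p_nonneg trans_pow_nonneg trans_pow_stat)
  also have "\<dots> = - (\<Sum>b\<in>UNIV. \<Sum>a\<in>UNIV. ?t a b * ln (?t a b / p a))"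
  proof -
    have "(\<Sum>b\<in>UNIV. \<Sum>a\<in>UNIV. ?t a b * ln (?t a b / p a))
        = (\<Sum>b\<in>UNIV. \<Sum>a\<in>UNIV. ?xlnx (?t a b)) - (\<Sum>a\<in>UNIV. ?xlnx (p a))"
      by (rule sum_xlnx_div_marginal)
        (simp_all add: p_nonneg trans_pow_nonneg trans_pow_stoch flip: sum_distrib_left)
    then show ?thesis
      using sum.swap[of "\<lambda>a b. ?xlnx (?t a b)" UNIV UNIV] by simp
  qed
  also have "\<dots> = trans_entropy d"
  proof -
    have summand: "?t a b * ln (?t a b / p a) = p a * trans_pow d a b * ln (trans_pow d a b)" for a b
      by (cases "p a = 0") simp_all
    show ?thesis
      unfolding trans_entropy_def summand by (subst sum.swap) (rule refl)
  qed
  finally show ?thesis .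
qed

lemma trans_entropy_bounds: "0 \<le> trans_entropy d \<and> trans_entropy d \<le> real CARD('a)"
proof -
  let ?g = "\<lambda>a. \<Sum>b\<in>UNIV. - (trans_pow d a b * ln (trans_pow d a b))"
  have summand: "0 \<le> - (trans_pow d a b * ln (trans_pow d a b))
      \<and> - (trans_pow d a b * ln (trans_pow d a b)) \<le> 1" for a b
    by (rule neg_xlnx_bounds[OF trans_pow_nonneg trans_pow_le_1])
  have g_nonneg: "0 \<le> ?g a" and g_le: "?g a \<le> (\<Sum>b\<in>(UNIV::'a set). 1)" for a
    by (intro sum_nonneg sum_mono, use summand in blast)+
  have "0 \<le> (\<Sum>a\<in>UNIV. p a * ?g a) \<and> (\<Sum>a\<in>UNIV. p a * ?g a) \<le> (\<Sum>a\<in>UNIV. p a * real CARD('a))"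
    using g_le
    by (intro conjI sum_nonneg sum_mono mult_nonneg_nonneg mult_left_mono p_nonneg g_nonneg) simp_all
  moreover have "trans_entropy d = (\<Sum>a\<in>UNIV. p a * ?g a)"
    by (simp add: trans_entropy_def sum_distrib_left sum_negf mult.assoc)
  ultimately show ?thesis
    by (simp add: p_sum flip: sum_distrib_right)
qed

end

section \<open>Averaging over anchored subsets\<close>

definition anchored_subsets :: "nat \<Rightarrow> nat set set" where
  "anchored_subsets n = {S. S \<subseteq> {..<n} \<and> 0 \<in> S}"

definition subset_weight :: "real \<Rightarrow> nat \<Rightarrow> nat set \<Rightarrow> real" where
  "subset_weight q n S = q ^ (card S - 1) * (1 - q) ^ (n - card S)"

lemma anchored_subsets_1 [simp]: "anchored_subsets (Suc 0) = {{0}}"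
  by (auto simp: anchored_subsets_def)

lemma finite_anchored_subsets: "finite (anchored_subsets n)"
  by (rule finite_subset[of _ "Pow {..<n}"]) (auto simp: anchored_subsets_def)

lemma anchored_subsetsD:
  assumes "S \<in> anchored_subsets n"
  shows "finite S" "S \<noteq> {}" "\<forall>i\<in>S. i < n" "1 \<le> card S" "card S \<le> n"
proof -
  have "S \<subseteq> {..<n}" "0 \<in> S"
    using assms by (auto simp: anchored_subsets_def)
  then show "finite S" "S \<noteq> {}" "\<forall>i\<in>S. i < n" "card S \<le> n"
    using finite_subset card_mono[of "{..<n}" S] by auto
  then show "1 \<le> card S"
    by (simp add: Suc_le_eq card_gt_0_iff)
qed

lemma sum_anchored_subsets_Suc:
  assumes "n \<ge> 1"
  shows "(\<Sum>S\<in>anchored_subsets (Suc n). f S)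
    = (\<Sum>S\<in>anchored_subsets n. f S) + (\<Sum>S\<in>anchored_subsets n. f (insert n S) :: real)"
proof -
  have split: "anchored_subsets (Suc n) = anchored_subsets n \<union> insert n ` anchored_subsets n"
  proof (intro set_eqI iffI)
    fix S assume S: "S \<in> anchored_subsets (Suc n)"
    show "S \<in> anchored_subsets n \<union> insert n ` anchored_subsets n"
    proof (cases "n \<in> S")
      case True
      then have "S = insert n (S - {n})" "S - {n} \<in> anchored_subsets n"
        using S assms by (auto simp: anchored_subsets_def)
      then show ?thesis
        by blast
    qed (use S in \<open>auto simp: anchored_subsets_def less_Suc_eq\<close>)
  qed (auto simp: anchored_subsets_def)
  have "inj_on (insert n) (anchored_subsets n)"
  proof (rule inj_onI)
    fix S T assume "S \<in> anchored_subsets n" "T \<in> anchored_subsets n" "insert n S = insert n T"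
    moreover from this(1,2) have "n \<notin> S" "n \<notin> T"
      using anchored_subsetsD(3) by blast+
    ultimately show "S = T"
      by (metis Diff_insert_absorb)
  qed
  moreover have "anchored_subsets n \<inter> insert n ` anchored_subsets n = {}"
    by (auto simp: anchored_subsets_def)
  ultimately show ?thesis
    unfolding split by (simp add: sum.union_disjoint finite_anchored_subsets sum.reindex)
qed

lemma subset_weight_Suc_notin:
  "S \<in> anchored_subsets n \<Longrightarrow> subset_weight q (Suc n) S = (1 - q) * subset_weight q n S"
  using anchored_subsetsD(5) by (simp add: subset_weight_def Suc_diff_le)

lemma subset_weight_Suc_insert:
  assumes "S \<in> anchored_subsets n"
  shows "subset_weight q (Suc n) (insert n S) = q * subset_weight q n S"
proof -
  have "n \<notin> S" "card (insert n S) = Suc (card S)"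
    using anchored_subsetsD(1,3)[OF assms] by auto
  moreover have "q ^ card S = q * q ^ (card S - 1)"
    using anchored_subsetsD(4)[OF assms] by (cases "card S") auto
  ultimately show ?thesis
    by (simp add: subset_weight_def)
qed

lemma sum_subset_weight: "n \<ge> 1 \<Longrightarrow> (\<Sum>S\<in>anchored_subsets n. subset_weight q n S) = 1"
proof (induction n rule: dec_induct)
  case (step n)
  then show ?case
    by (simp add: sum_anchored_subsets_Suc subset_weight_Suc_notin subset_weight_Suc_insert
        flip: sum_distrib_left)
qed (simp add: subset_weight_def)

lemma sum_subset_weight_last_gap:
  "(\<Sum>S\<in>anchored_subsets (Suc k). subset_weight q (Suc k) S * g (Suc k - Max S))
     = (\<Sum>i<k. q * (1 - q) ^ i * g (Suc i)) + (1 - q) ^ k * g (Suc k)"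
proof (induction k arbitrary: g)
  case 0
  show ?case
    unfolding anchored_subsets_1 by (simp add: subset_weight_def)
next
  case (Suc k)
  let ?A = "anchored_subsets (Suc k)" and ?w = "subset_weight q (Suc k)"
  have gap: "Suc (Suc k) - Max S = Suc (Suc k - Max S)" if "S \<in> ?A" for S
    using anchored_subsetsD[OF that] by (simp add: Suc_diff_le less_imp_le)
  have max: "Max (insert (Suc k) S) = Suc k" if "S \<in> ?A" for S
    using anchored_subsetsD[OF that] by (auto intro!: Max_eqI)
  have "(\<Sum>S\<in>anchored_subsets (Suc (Suc k)). subset_weight q (Suc (Suc k)) S * g (Suc (Suc k) - Max S))
      = (\<Sum>S\<in>?A. (1 - q) * (?w S * g (Suc (Suc k - Max S)))) + (\<Sum>S\<in>?A. q * g 1 * ?w S)"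
    by (simp add: sum_anchored_subsets_Suc subset_weight_Suc_notin subset_weight_Suc_insert gap max
        mult_ac cong: sum.cong)
  also have "\<dots> = (1 - q) * (\<Sum>S\<in>?A. ?w S * g (Suc (Suc k - Max S))) + q * g 1"
    by (simp add: sum_subset_weight flip: sum_distrib_left)
  also have "\<dots> = (1 - q) * ((\<Sum>i<k. q * (1 - q) ^ i * g (Suc (Suc i))) + (1 - q) ^ k * g (Suc (Suc k)))
      + q * g 1"
    using Suc[of "\<lambda>j. g (Suc j)"] by simp
  also have "\<dots> = (\<Sum>i<Suc k. q * (1 - q) ^ i * g (Suc i)) + (1 - q) ^ Suc k * g (Suc (Suc k))"
  proof -
    have "(1 - q) * (\<Sum>i<k. q * (1 - q) ^ i * g (Suc (Suc i)))
        = (\<Sum>i<k. q * (1 - q) ^ Suc i * g (Suc (Suc i)))"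
      by (simp add: sum_distrib_left mult_ac)
    then show ?thesis
      by (simp only: sum.lessThan_Suc_shift distrib_left) simp
  qed
  finally show ?case .
qed

lemma sum_subset_weight_additive:
  fixes E :: "nat set \<Rightarrow> real" and h :: "nat \<Rightarrow> real"
  assumes E_singleton: "E {0} = E0"
    and E_insert: "\<And>S m. finite S \<Longrightarrow> S \<noteq> {} \<Longrightarrow> \<forall>i\<in>S. i < m \<Longrightarrow>
      E (insert m S) = E S + h (m - Max S)"
  shows "(\<Sum>S\<in>anchored_subsets (Suc k). subset_weight q (Suc k) S * E S)
    = E0 + (\<Sum>i<k. h (Suc i) * (q\<^sup>2 * (1 - q) ^ i * (real k - real i) + q * (1 - q) ^ Suc i))"
proof (induction k)
  case 0
  show ?case
    unfolding anchored_subsets_1 by (simp add: subset_weight_def E_singleton)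
next
  case (Suc k)
  let ?A = "anchored_subsets (Suc k)" and ?w = "subset_weight q (Suc k)"
  have "E (insert (Suc k) S) = E S + h (Suc k - Max S)" if "S \<in> ?A" for S
    using anchored_subsetsD[OF that] by (intro E_insert) auto
  then have "(\<Sum>S\<in>anchored_subsets (Suc (Suc k)). subset_weight q (Suc (Suc k)) S * E S)
      = (\<Sum>S\<in>?A. ?w S * E S + q * (?w S * h (Suc k - Max S)))"
    by (simp add: sum_anchored_subsets_Suc subset_weight_Suc_notin subset_weight_Suc_insert
        algebra_simps flip: sum.distrib cong: sum.cong)
  also have "\<dots> = E0 + (\<Sum>i<k. h (Suc i) * (q\<^sup>2 * (1 - q) ^ i * (real k - real i) + q * (1 - q) ^ Suc i))
      + q * ((\<Sum>i<k. q * (1 - q) ^ i * h (Suc i)) + (1 - q) ^ k * h (Suc k))"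
    by (simp add: sum.distrib Suc.IH sum_subset_weight_last_gap flip: sum_distrib_left)
  also have "\<dots> = E0 + (\<Sum>i<Suc k. h (Suc i) * (q\<^sup>2 * (1 - q) ^ i * (real (Suc k) - real i) + q * (1 - q) ^ Suc i))"
  proof -
    have step: "(\<Sum>i<k. h (Suc i) * (q\<^sup>2 * (1 - q) ^ i * (real (Suc k) - real i) + q * (1 - q) ^ Suc i))
        = (\<Sum>i<k. h (Suc i) * (q\<^sup>2 * (1 - q) ^ i * (real k - real i) + q * (1 - q) ^ Suc i)
          + q * (q * (1 - q) ^ i * h (Suc i)))"
      by (rule sum.cong) (simp_all add: algebra_simps power2_eq_square)
    have last: "h (Suc k) * (q\<^sup>2 * (1 - q) ^ k * (real (Suc k) - real k) + q * (1 - q) ^ Suc k)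
        = q * ((1 - q) ^ k * h (Suc k))"
      by (simp add: algebra_simps power2_eq_square)
    show ?thesis
      unfolding sum.lessThan_Suc step last sum.distrib sum_distrib_left[symmetric]
      by (simp add: algebra_simps)
  qed
  finally show ?case .
qed

lemma gap_average_tendsto:
  fixes c e h :: "nat \<Rightarrow> real"
  assumes c_nonneg: "\<And>i. 0 \<le> c i" and c_summable: "summable c"
    and e_nonneg: "\<And>i. 0 \<le> e i" and e_sum_le: "\<And>k. (\<Sum>i<k. e i) \<le> E"
    and h_bound: "\<And>i. \<bar>h i\<bar> \<le> B"
  shows "summable (\<lambda>i. c i * h i)
    \<and> (\<lambda>k. (z + (\<Sum>i<k. h i * (c i * (real k - real i) + e i))) / (real k + 1))
        \<longlonglongrightarrow> (\<Sum>i. c i * h i)"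
proof -
  have B: "0 \<le> B"
    using h_bound[of 0] by linarith
  have ch_bound: "norm (c i * h i) \<le> c i * B" for i
    using c_nonneg[of i] h_bound[of i] by (simp add: abs_mult mult_left_mono)
  define a where "a i k = (if i < k then c i * h i * ((real k - real i) / (real k + 1)) else 0)" for i k
  have a_lim: "(\<lambda>k. a i k) \<longlonglongrightarrow> c i * h i" for i
  proof -
    have "(\<lambda>k. c i * h i * ((real k - real i) / (real k + 1))) \<longlonglongrightarrow> c i * h i * 1"
      by (intro tendsto_mult tendsto_const) real_asymp
    moreover have "\<forall>\<^sub>F k in sequentially. c i * h i * ((real k - real i) / (real k + 1)) = a i k"
      using eventually_gt_at_top[of i] by eventually_elim (simp add: a_def)
    ultimately show ?thesis
      by (simp add: Lim_transform_eventually)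
  qed
  have a_bound: "norm (a i k) \<le> c i * B" for i k
  proof (cases "i < k")
    case True
    have "norm (a i k) = \<bar>c i * h i\<bar> * \<bar>(real k - real i) / (real k + 1)\<bar>"
      using True by (simp only: a_def if_True real_norm_def abs_mult)
    also have "\<dots> \<le> \<bar>c i * h i\<bar> * 1"
      using True by (intro mult_left_mono) simp_all
    finally show ?thesis
      using ch_bound[of i] by simp
  qed (simp add: a_def c_nonneg B)
  have summable_bound: "summable (\<lambda>i. c i * B)"
    using c_summable by (rule summable_mult2)
  have "(\<lambda>k. suminf (\<lambda>i. a i k)) \<longlonglongrightarrow> (\<Sum>i. c i * h i)"
    using tannerys_theorem[of a "\<lambda>i. c i * h i" sequentially "\<lambda>i. c i * B"] a_lim a_bound summable_bound
    by (auto intro: always_eventually)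
  moreover have "suminf (\<lambda>i. a i k) = (\<Sum>i<k. c i * h i * (real k - real i)) / (real k + 1)" for k
    by (subst suminf_finite[where N = "{..<k}"]) (auto simp: a_def sum_divide_distrib)
  ultimately have main:
    "(\<lambda>k. (\<Sum>i<k. c i * h i * (real k - real i)) / (real k + 1)) \<longlonglongrightarrow> (\<Sum>i. c i * h i)"
    by simp
  have "norm (\<Sum>i<k. h i * e i) \<le> B * E" for k
  proof -
    have "norm (\<Sum>i<k. h i * e i) \<le> (\<Sum>i<k. B * e i)"
      using h_bound e_nonneg by (intro sum_norm_le) (simp add: abs_mult mult_right_mono)
    also have "\<dots> \<le> B * E"
      using e_sum_le B by (simp add: mult_left_mono flip: sum_distrib_left)
    finally show ?thesis .
  qed
  then have "\<forall>\<^sub>F k in sequentially. norm ((\<Sum>i<k. h i * e i) / (real k + 1)) \<le> B * E / (real k + 1)"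
    by (intro always_eventually allI) (simp add: divide_right_mono)
  then have rest: "(\<lambda>k. (\<Sum>i<k. h i * e i) / (real k + 1)) \<longlonglongrightarrow> 0"
    by (rule Lim_null_comparison) real_asymp
  have const: "(\<lambda>k. z / (real k + 1)) \<longlonglongrightarrow> 0"
    by real_asymp
  have "(\<lambda>k. z / (real k + 1) + (\<Sum>i<k. c i * h i * (real k - real i)) / (real k + 1)
      + (\<Sum>i<k. h i * e i) / (real k + 1)) \<longlonglongrightarrow> 0 + (\<Sum>i. c i * h i) + 0"
    by (intro tendsto_add const main rest)
  moreover have "summable (\<lambda>i. c i * h i)"
    using summable_bound ch_bound by (rule summable_comparison_test')
  moreover have "(z + (\<Sum>i<k. h i * (c i * (real k - real i) + e i))) / (real k + 1)
      = z / (real k + 1) + (\<Sum>i<k. c i * h i * (real k - real i)) / (real k + 1)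
        + (\<Sum>i<k. h i * e i) / (real k + 1)" for k
    by (simp add: sum.distrib distrib_left add_divide_distrib mult_ac)
  ultimately show ?thesis
    by simp
qed

locale unit_interval_prob = prob_space lam for lam :: "real measure" +
  assumes sets_lam: "sets lam = sets borel"
    and emeasure_unit_interval: "emeasure lam {0..1} = 1"
begin

lemma AE_unit_interval: "AE q in lam. q \<in> {0..1}"
proof -
  have "{0..1::real} \<in> events"
    using sets_lam by simp
  then show ?thesis
    using emeasure_unit_interval by (subst AE_in_set_eq_1) (simp_all add: emeasure_eq_measure)
qed

lemma integrable_bernstein: "integrable lam (\<lambda>q. q ^ a * (1 - q) ^ b)"
proof (rule integrable_const_bound[where B = 1])
  show "AE q in lam. norm (q ^ a * (1 - q) ^ b) \<le> 1"
    using AE_unit_interval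
    by eventually_elim (auto simp: abs_mult power_abs intro!: mult_le_one power_le_one)
  show "(\<lambda>q. q ^ a * (1 - q) ^ b) \<in> borel_measurable lam"
    by (simp add: measurable_cong_sets[OF sets_lam refl])
qed

lemma integral_bernstein_nonneg: "0 \<le> (\<integral>q. q ^ a * (1 - q) ^ b \<partial>lam)"
  by (rule integral_nonneg_AE) (use AE_unit_interval in eventually_elim, auto)

lemma sum_integral_le_1:
  fixes f :: "nat \<Rightarrow> real \<Rightarrow> real"
  assumes "\<And>i. integrable lam (f i)" "AE q in lam. (\<Sum>i<k. f i q) \<le> 1"
  shows "(\<Sum>i<k. \<integral>q. f i q \<partial>lam) \<le> 1"
proof -
  have "(\<Sum>i<k. \<integral>q. f i q \<partial>lam) = (\<integral>q. (\<Sum>i<k. f i q) \<partial>lam)"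
    using assms(1) by (simp add: integral_sum)
  also have "\<dots> \<le> (\<integral>q. 1 \<partial>lam)"
    by (rule integral_mono_AE) (use assms in auto)
  finally show ?thesis
    by (simp add: prob_space)
qed

lemma sum_integral_gap_le_1:
  "(\<Sum>i<k. \<integral>q. q\<^sup>2 * (1 - q) ^ i \<partial>lam) \<le> 1"
  "(\<Sum>i<k. \<integral>q. q * (1 - q) ^ Suc i \<partial>lam) \<le> 1"
proof -
  have geom: "q * (\<Sum>i<k. (1 - q) ^ i) = 1 - (1 - q) ^ k" for q :: real
    using one_diff_power_eq[of "1 - q" k] by simp
  show "(\<Sum>i<k. \<integral>q. q\<^sup>2 * (1 - q) ^ i \<partial>lam) \<le> 1"
  proof (rule sum_integral_le_1)
    show "AE q in lam. (\<Sum>i<k. q\<^sup>2 * (1 - q) ^ i) \<le> 1"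
      using AE_unit_interval
    proof eventually_elim
      case (elim q)
      then have "q * (1 - (1 - q) ^ k) \<le> 1"
        by (intro mult_le_one) (auto intro!: power_le_one)
      then show ?case
        by (simp add: power2_eq_square mult.assoc geom flip: sum_distrib_left)
    qed
  qed (rule integrable_bernstein)
  show "(\<Sum>i<k. \<integral>q. q * (1 - q) ^ Suc i \<partial>lam) \<le> 1"
  proof (rule sum_integral_le_1)
    show "AE q in lam. (\<Sum>i<k. q * (1 - q) ^ Suc i) \<le> 1"
      using AE_unit_interval
    proof eventually_elim
      case (elim q)
      have "(\<Sum>i<k. q * (1 - q) ^ Suc i) = (1 - q) * (q * (\<Sum>i<k. (1 - q) ^ i))"
        by (simp add: sum_distrib_left mult_ac)
      also have "\<dots> \<le> 1"
        using elim by (simp only: geom) (intro mult_le_one, auto intro!: power_le_one)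
      finally show ?case .
    qed
  qed (use integrable_bernstein[of 1 "Suc _"] in simp)
qed

end

lemma (in markov_shift) asc_seq_Suc:
  assumes "unit_interval_prob lam"
  shows "asc_seq lam M (Suc k) = (state_entropy + (\<Sum>i<k. trans_entropy (Suc i) *
      ((\<integral>q. q\<^sup>2 * (1 - q) ^ i \<partial>lam) * (real k - real i) + (\<integral>q. q * (1 - q) ^ Suc i \<partial>lam))))
      / (real k + 1)"
proof -
  interpret unit_interval_prob lam
    by (rule assms)
  let ?E = "\<lambda>S. part_entropy M (alpha_S S)"
  let ?h = "\<lambda>i. trans_entropy (Suc i)"
  have integrable_weight: "integrable lam (\<lambda>q. subset_weight q n S * ?E S)" for n S
    unfolding subset_weight_def by (intro integrable_mult_left integrable_bernstein)
  have integrable_gap: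
    "integrable lam (\<lambda>q. ?h i * (q\<^sup>2 * (1 - q) ^ i * (real k - real i) + q * (1 - q) ^ Suc i))" for i
    using integrable_bernstein[of 2 i] integrable_bernstein[of 1 "Suc i"] by simp
  have "(\<Sum>S\<in>anchored_subsets (Suc k). b_weight lam (Suc k) S * ?E S)
      = (\<integral>q. (\<Sum>S\<in>anchored_subsets (Suc k). subset_weight q (Suc k) S * ?E S) \<partial>lam)"
    using integrable_weight by (simp add: b_weight_def subset_weight_def integral_sum)
  also have "\<dots> = (\<integral>q. state_entropy
      + (\<Sum>i<k. ?h i * (q\<^sup>2 * (1 - q) ^ i * (real k - real i) + q * (1 - q) ^ Suc i)) \<partial>lam)"
    using part_entropy_insert_max
    by (simp add: sum_subset_weight_additive[where E = ?E] part_entropy_singleton)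
  also have "\<dots> = state_entropy + (\<Sum>i<k. ?h i *
      ((\<integral>q. q\<^sup>2 * (1 - q) ^ i \<partial>lam) * (real k - real i) + (\<integral>q. q * (1 - q) ^ Suc i \<partial>lam)))"
    using integrable_gap integrable_bernstein[of 2] integrable_bernstein[of 1 "Suc _"]
    by (simp add: integral_sum prob_space)
  finally show ?thesis
    by (simp add: asc_seq_def anchored_subsets_def)
qed

theorem propositionB7:
  fixes P :: "'a::finite \<Rightarrow> 'a \<Rightarrow> real" and p :: "'a \<Rightarrow> real"
    and M :: "(int \<Rightarrow> 'a) measure" and lam :: "real measure"
  assumes P_nonneg: "\<And>a b. P a b \<ge> 0"
    and P_stoch: "\<And>a. (\<Sum>b\<in>UNIV. P a b) = 1"
    and p_nonneg: "\<And>a. p a \<ge> 0"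
    and p_sum: "(\<Sum>a\<in>UNIV. p a) = 1"
    and p_stat: "\<And>b. (\<Sum>a\<in>UNIV. p a * P a b) = p b"
    and M_prob: "prob_space M"
    and M_space: "space M = UNIV"
    and M_sets: "sets M = sets (Pi\<^sub>M UNIV (\<lambda>_::int. count_space (UNIV :: 'a set)))"
    and M_markov: "\<And>(k::int) (n::nat) (w::nat \<Rightarrow> 'a).
        measure M {x. \<forall>j<Suc n. x (k + int j) = w j}
          = p (w 0) * (\<Prod>j<n. P (w j) (w (Suc j)))"
    and lam_prob: "prob_space lam"
    and lam_sets: "sets lam = sets borel"
    and lam_unit: "emeasure lam {0..1} = 1"
    and lam_sym: "\<And>f :: real \<Rightarrow> real. f \<in> borel_measurable borel \<Longrightarrow> bounded (range f) \<Longrightarrow>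
        (\<integral>x. f x \<partial>lam) = (\<integral>x. f (1 - x) \<partial>lam)"
  shows "summable (\<lambda>i. (\<integral>q. q\<^sup>2 * (1 - q) ^ i \<partial>lam) * cond_entropy M alpha (alpha_i (Suc i)))
    \<and> asc_seq lam M \<longlonglongrightarrow>
        (\<Sum>i. (\<integral>q. q\<^sup>2 * (1 - q) ^ i \<partial>lam) * cond_entropy M alpha (alpha_i (Suc i)))"
proof -
  interpret markov_shift P p M
    using P_nonneg P_stoch p_nonneg p_sum p_stat M_prob M_space M_sets M_markov
    unfolding markov_shift_def markov_shift_axioms_def stationary_markov_chain_def by blast
  have lam: "unit_interval_prob lam"
    using lam_prob lam_sets lam_unit
    unfolding unit_interval_prob_def unit_interval_prob_axioms_def by blast
  interpret unit_interval_prob lam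
    by (rule lam)
  let ?c = "\<lambda>i. \<integral>q. q\<^sup>2 * (1 - q) ^ i \<partial>lam"
  have "summable ?c"
    using integral_bernstein_nonneg sum_integral_gap_le_1(1) by (intro summableI_nonneg_bounded)
  then have "summable (\<lambda>i. ?c i * trans_entropy (Suc i))
      \<and> (\<lambda>k. asc_seq lam M (Suc k)) \<longlonglongrightarrow> (\<Sum>i. ?c i * trans_entropy (Suc i))"
    unfolding asc_seq_Suc[OF lam]
    using integral_bernstein_nonneg integral_bernstein_nonneg[of 1 "Suc _"] sum_integral_gap_le_1(2)
      trans_entropy_bounds
    by (intro gap_average_tendsto[where B = "real CARD('a)"]) auto
  then show ?thesis
    by (simp add: cond_entropy_alpha_i LIMSEQ_imp_Suc)
qed

end
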